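(* There exists a block gluing tree-shift that is not strongly irreducible, and there exists a uniformly block gluing tree-shift that is not uniformly strongly irreducible.
   Context: $\Sigma=\{0,1\}$. $\Sigma^*$ is the set of finite words, with $\epsilon$ the empty word. $\Sigma^k$ is the set of words of length $k$, and $\Sigma_n=\bigcup_{0\le k\le n}\Sigma^k$. A tree is $t:\Sigma^*\to\mathcal{A}$ with $\mathcal{A}$ finite, and we write $t_x=t(x)$. A pattern $u$ is a map on a finite prefix-closed support $S(u)$. A tree-shift is $\mathsf{X}_{\mathcal{F}}$, the set of trees in which no pattern of $\mathcal{F}$ occurs at any node. A pattern is accepted by $X$ if it occurs in some $t\in X$. $B_n(X)=\{t|_{\Sigma_{n-1}}:t\in X\}$. For $w\in\Sigma^*$, $t|_{wS(v)}=v$ means $t_{wy}=v_y$ for all $y\in S(v)$. A leaf of $u$ is $w\in S(u)$ with $w0,w1\notin S(u)$. A complete prefix code (CPC) is a finite set $P\subseteq\Sigma^*\setminus\{\epsilon\}$ such that no word of $P$ is a prefix of another, and every $x$ with $|x|\ge\max_{y\in P}|y|$ has a prefix in $P$. Patterns $u,v$ are connected through $P$ if there is $t\in X$ with $t|_{S(u)}=u$ and $t|_{wxS(v)}=v$ for every leaf $w$ of $u$ and every $x\in P$. $X$ is: - block gluing if there is a CPC $P$ such that for every $n\ge1$ any $u,v\in B_n(X)$ are connected through $P$; - uniformly block gluing if this holds with $P=\Sigma^k$ for some $k\ge1$; - strongly irreducible if there is a CPC $P$ through which any two patterns accepted by $X$ are connected; - uniformly strongly irreducible if this holds with $P=\Sigma^k$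 for some $k\ge1$. *)

theory Defs
  imports Main "HOL-Library.Sublist"
begin

text \<open>Words over \<Sigma> = {0,1} are bool lists (False = 0, True = 1); x is a prefix of x @ y.
  Trees are functions bool list \<Rightarrow> 'a; the finite alphabet is an explicit set A.\<close>

type_synonym word = "bool list"
type_synonym 'a tree = "word \<Rightarrow> 'a"
type_synonym 'a pattern = "word \<Rightarrow> 'a option"

definition is_pattern :: "'a pattern \<Rightarrow> bool" where
  "is_pattern u \<longleftrightarrow> finite (dom u) \<and> (\<forall>x y. x @ y \<in> dom u \<longrightarrow> x \<in> dom u)"

definition occurs_at :: "'a tree \<Rightarrow> word \<Rightarrow> 'a pattern \<Rightarrow> bool" where
  "occurs_at t w u \<longleftrightarrow> (\<forall>y \<in> dom u. u y = Some (t (w @ y)))"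

definition tree_shift_of :: "'a set \<Rightarrow> 'a pattern set \<Rightarrow> 'a tree set" where
  "tree_shift_of A F = {t. (\<forall>x. t x \<in> A) \<and> (\<forall>u \<in> F. \<forall>w. \<not> occurs_at t w u)}"

definition is_tree_shift :: "'a set \<Rightarrow> 'a tree set \<Rightarrow> bool" where
  "is_tree_shift A X \<longleftrightarrow> finite A \<and> (\<exists>F. (\<forall>u\<in>F. is_pattern u) \<and> X = tree_shift_of A F)"

definition accepted :: "'a tree set \<Rightarrow> 'a pattern \<Rightarrow> bool" where
  "accepted X u \<longleftrightarrow> is_pattern u \<and> (\<exists>t \<in> X. \<exists>w. occurs_at t w u)"

text \<open>B_n(X) = { t restricted to \<Sigma>_{n-1} : t \<in> X }\<close>
definition blocks :: "'a tree set \<Rightarrow> nat \<Rightarrow> 'a pattern set" where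
  "blocks X n = {(\<lambda>x. if length x < n then Some (t x) else None) | t. t \<in> X}"

definition leaf :: "'a pattern \<Rightarrow> word \<Rightarrow> bool" where
  "leaf u w \<longleftrightarrow> w \<in> dom u \<and> w @ [False] \<notin> dom u \<and> w @ [True] \<notin> dom u"

definition complete_prefix_code :: "word set \<Rightarrow> bool" where
  "complete_prefix_code P \<longleftrightarrow> finite P \<and> [] \<notin> P
     \<and> (\<forall>x\<in>P. \<forall>y\<in>P. prefix x y \<longrightarrow> x = y)
     \<and> (\<forall>x. (\<forall>y\<in>P. length y \<le> length x) \<longrightarrow> (\<exists>y\<in>P. prefix y x))"

definition connected_through :: "'a tree set \<Rightarrow> word set \<Rightarrow> 'a pattern \<Rightarrow> 'a pattern \<Rightarrow> bool" where
  "connected_through X P u v \<longleftrightarrow>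
     (\<exists>t \<in> X. occurs_at t [] u \<and> (\<forall>w x. leaf u w \<longrightarrow> x \<in> P \<longrightarrow> occurs_at t (w @ x) v))"

definition block_gluing :: "'a tree set \<Rightarrow> bool" where
  "block_gluing X \<longleftrightarrow> (\<exists>P. complete_prefix_code P \<and>
     (\<forall>n\<ge>1. \<forall>u \<in> blocks X n. \<forall>v \<in> blocks X n. connected_through X P u v))"

definition uniformly_block_gluing :: "'a tree set \<Rightarrow> bool" where
  "uniformly_block_gluing X \<longleftrightarrow> (\<exists>k\<ge>1.
     (\<forall>n\<ge>1. \<forall>u \<in> blocks X n. \<forall>v \<in> blocks X n. connected_through X {x. length x = k} u v))"

definition strongly_irreducible :: "'a tree set \<Rightarrow> bool" where
  "strongly_irreducible X \<longleftrightarrow> (\<exists>P. complete_prefix_code P \<and>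
     (\<forall>u v. accepted X u \<longrightarrow> accepted X v \<longrightarrow> connected_through X P u v))"

definition uniformly_strongly_irreducible :: "'a tree set \<Rightarrow> bool" where
  "uniformly_strongly_irreducible X \<longleftrightarrow> (\<exists>k\<ge>1.
     (\<forall>u v. accepted X u \<longrightarrow> accepted X v \<longrightarrow> connected_through X {x. length x = k} u v))"

end

theory Submission
  imports Defs
begin

text \<open>Both separations are witnessed by the shift of binary trees that are constant on every
  level. Two blocks of height n glue at distance 1, since a single new level of the first tree
  already begins with the levels of the second. Strong irreducibility fails because the copies
  of a pattern glued below the leaves of another pattern start at the same depth only if those
  leaves do: take u with leaves at depths 1 and 2 and v showing two different symbols at
  depths 0 and 1; the copies of v then demand two different symbols on one level.\<close>

definition pattern_of :: "'a tree \<Rightarrow> word set \<Rightarrow> 'a pattern" where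
  "pattern_of t S = (\<lambda>z. if z \<in> S then Some (t z) else None)"

lemma dom_pattern_of [simp]: "dom (pattern_of t S) = S"
  by (auto simp: pattern_of_def dom_def)

lemma occurs_at_pattern_of: "occurs_at t [] (pattern_of t S)"
  unfolding occurs_at_def dom_pattern_of by (simp add: pattern_of_def)

lemma is_pattern_pattern_of:
  assumes "finite S" and "\<And>x y. x @ y \<in> S \<Longrightarrow> x \<in> S"
  shows "is_pattern (pattern_of t S)"
  using assms by (auto simp: is_pattern_def)

lemma blocks_eq: "blocks X n = {pattern_of t {x. length x < n} | t. t \<in> X}"
  by (simp add: blocks_def pattern_of_def)

lemma leaf_block_iff: "leaf (pattern_of t {x. length x < n}) w \<longleftrightarrow> Suc (length w) = n"
  by (auto simp: leaf_def)

lemma complete_prefix_code_nonempty: "complete_prefix_code P \<Longrightarrow> P \<noteq> {}"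
  by (auto simp: complete_prefix_code_def)

lemma complete_prefix_code_length_eq:
  assumes "k \<ge> 1"
  shows "complete_prefix_code {x::word. length x = k}"
proof -
  have "finite {x::word. length x = k}"
    using finite_lists_length_eq[of "UNIV :: bool set" k] by simp
  moreover have "\<exists>y\<in>{y::word. length y = k}. prefix y x"
    if "\<forall>y\<in>{y::word. length y = k}. length y \<le> length x" for x :: word
    using that[rule_format, of "replicate k False"]
    by (intro bexI[of _ "take k x"]) (simp_all add: take_is_prefix)
  ultimately show ?thesis
    using assms by (auto simp: complete_prefix_code_def prefix_def)
qed

definition level_constant :: "'a set \<Rightarrow> 'a tree set" where
  "level_constant A = {t. \<exists>f. range f \<subseteq> A \<and> t = (\<lambda>x. f (length x))}"

definition level_conflicts :: "'a pattern set" where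
  "level_conflicts = {u. is_pattern u \<and>
     (\<exists>x y a b. u x = Some a \<and> u y = Some b \<and> length x = length y \<and> a \<noteq> b)}"

lemma level_constant_iff:
  "t \<in> level_constant A \<longleftrightarrow> (\<forall>x. t x \<in> A) \<and> (\<forall>x y. length x = length y \<longrightarrow> t x = t y)"
proof
  assume t: "(\<forall>x. t x \<in> A) \<and> (\<forall>x y. length x = length y \<longrightarrow> t x = t y)"
  then have "t = (\<lambda>x. t (replicate (length x) False))"
    by (metis length_replicate)
  moreover have "range (\<lambda>n. t (replicate n False)) \<subseteq> A"
    using t by blast
  ultimately show "t \<in> level_constant A"
    unfolding level_constant_def by blast
next
  assume "t \<in> level_constant A"
  then obtain f where "range f \<subseteq> A" "t = (\<lambda>x. f (length x))"
    unfolding level_constant_def by blast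
  then show "(\<forall>x. t x \<in> A) \<and> (\<forall>x y. length x = length y \<longrightarrow> t x = t y)"
    by auto
qed

lemma level_constant_in_alphabet: "t \<in> level_constant A \<Longrightarrow> t x \<in> A"
  by (auto simp: level_constant_def)

lemma level_constant_same_length:
  "t \<in> level_constant A \<Longrightarrow> length x = length y \<Longrightarrow> t x = t y"
  by (auto simp: level_constant_def)

lemma level_constant_eq_tree_shift_of: "level_constant A = tree_shift_of A level_conflicts"
proof (intro set_eqI iffI)
  fix t assume t: "t \<in> level_constant A"
  have "\<not> occurs_at t w u" if u: "u \<in> level_conflicts" for u w
  proof
    assume "occurs_at t w u"
    moreover obtain x y a b where "u x = Some a" "u y = Some b" "length x = length y" "a \<noteq> b"
      using u by (auto simp: level_conflicts_def)
    ultimately have "t (w @ x) \<noteq> t (w @ y)" and "length (w @ x) = length (w @ y)"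
      by (metis domI occurs_at_def option.inject, simp)
    with t show False
      using level_constant_same_length by blast
  qed
  then show "t \<in> tree_shift_of A level_conflicts"
    using level_constant_in_alphabet[OF t] by (simp add: tree_shift_of_def)
next
  fix t assume t: "t \<in> tree_shift_of A level_conflicts"
  have "t x = t y" if "length x = length y" for x y
  proof (rule ccontr)
    assume "t x \<noteq> t y"
    define S where "S = {z. prefix z x \<or> prefix z y}"
    have "S \<subseteq> set (prefixes x) \<union> set (prefixes y)"
      by (auto simp: S_def)
    then have "finite S"
      by (rule finite_subset) simp
    moreover have "z \<in> S" if "z @ z' \<in> S" for z z'
      using that append_prefixD by (auto simp: S_def)
    ultimately have "is_pattern (pattern_of t S)"
      by (rule is_pattern_pattern_of)
    moreover have "pattern_of t S x = Some (t x)" "pattern_of t S y = Some (t y)"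
      by (simp_all add: pattern_of_def S_def)
    ultimately have "pattern_of t S \<in> level_conflicts"
      using \<open>t x \<noteq> t y\<close> \<open>length x = length y\<close> unfolding level_conflicts_def by blast
    with t show False
      using occurs_at_pattern_of[of t S] unfolding tree_shift_of_def by blast
  qed
  with t show "t \<in> level_constant A"
    unfolding tree_shift_of_def level_constant_iff by blast
qed

lemma is_tree_shift_level_constant: "finite A \<Longrightarrow> is_tree_shift A (level_constant A)"
  unfolding is_tree_shift_def level_constant_eq_tree_shift_of
  by (intro conjI exI[of _ level_conflicts]) (auto simp: level_conflicts_def)

lemma level_constant_connected_blocks:
  assumes "k \<ge> 1" "n \<ge> 1" "u \<in> blocks (level_constant A) n" "v \<in> blocks (level_constant A) n"
  shows "connected_through (level_constant A) {x. length x = k} u v"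
proof -
  obtain f where f: "range f \<subseteq> A" "u = pattern_of (\<lambda>x. f (length x)) {x. length x < n}"
    using assms(3) by (auto simp: blocks_eq level_constant_def)
  obtain g where g: "range g \<subseteq> A" "v = pattern_of (\<lambda>x. g (length x)) {x. length x < n}"
    using assms(4) by (auto simp: blocks_eq level_constant_def)
  \<comment> \<open>levels \<open>n \<le> m < n - 1 + k\<close> of the gap repeat the top level of the second tree\<close>
  define h where "h m = (if m < n then f m else g (m + 1 - n - k))" for m
  let ?t = "\<lambda>x. h (length x)"
  have "range h \<subseteq> A"
    using f(1) g(1) by (auto simp: h_def)
  then have "?t \<in> level_constant A"
    by (auto simp: level_constant_def)
  moreover have "occurs_at ?t [] u"
    unfolding f(2) occurs_at_def dom_pattern_of by (simp add: pattern_of_def h_def)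
  moreover have "occurs_at ?t (w @ x) v" if "leaf u w" "length x = k" for w x
  proof -
    have "Suc (length w) = n"
      using that(1) unfolding f(2) leaf_block_iff .
    with assms(1) that(2) show ?thesis
      unfolding g(2) occurs_at_def dom_pattern_of by (auto simp: pattern_of_def h_def)
  qed
  ultimately show ?thesis
    unfolding connected_through_def by blast
qed

lemma block_gluing_level_constant: "block_gluing (level_constant A)"
  unfolding block_gluing_def
  using complete_prefix_code_length_eq[of 1] level_constant_connected_blocks[of 1] by blast

lemma uniformly_block_gluing_level_constant: "uniformly_block_gluing (level_constant A)"
  unfolding uniformly_block_gluing_def
  using level_constant_connected_blocks[of 1] by blast

definition two_depth_leaves :: "'a \<Rightarrow> 'a pattern" where
  "two_depth_leaves a = pattern_of (\<lambda>_. a) {[], [False], [True], [True, False], [True, True]}"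

definition root_child_change :: "'a \<Rightarrow> 'a \<Rightarrow> 'a pattern" where
  "root_child_change a b = pattern_of (\<lambda>z. if z = [] then a else b) {[], [False]}"

lemma occurs_at_root_child_change_iff:
  "occurs_at t w (root_child_change a b) \<longleftrightarrow> t w = a \<and> t (w @ [False]) = b"
  unfolding occurs_at_def root_child_change_def dom_pattern_of by (auto simp: pattern_of_def)

lemma accepted_level_constant:
  assumes "range f \<subseteq> A" "finite S" "\<And>x y. x @ y \<in> S \<Longrightarrow> x \<in> S"
  shows "accepted (level_constant A) (pattern_of (\<lambda>x. f (length x)) S)"
proof -
  have "is_pattern (pattern_of (\<lambda>x. f (length x)) S)"
    using assms(2,3) by (rule is_pattern_pattern_of)
  moreover have "(\<lambda>x. f (length x)) \<in> level_constant A"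
    using assms(1) by (auto simp: level_constant_def)
  ultimately show ?thesis
    using occurs_at_pattern_of unfolding accepted_def by blast
qed

lemma accepted_two_depth_leaves: "a \<in> A \<Longrightarrow> accepted (level_constant A) (two_depth_leaves a)"
  unfolding two_depth_leaves_def
  by (rule accepted_level_constant[of "\<lambda>_. a"]) (auto simp: append_eq_Cons_conv)

lemma accepted_root_child_change:
  assumes "a \<in> A" "b \<in> A"
  shows "accepted (level_constant A) (root_child_change a b)"
proof -
  have "root_child_change a b = pattern_of (\<lambda>z. if length z = 0 then a else b) {[], [False]}"
    by (auto simp: root_child_change_def pattern_of_def)
  then show ?thesis
    by (simp only:)
      (rule accepted_level_constant[of "\<lambda>m. if m = 0 then a else b"];
        use assms in \<open>auto simp: append_eq_Cons_conv\<close>)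
qed

lemma level_constant_not_connected:
  assumes "a \<noteq> b" "x \<in> P"
  shows "\<not> connected_through (level_constant A) P (two_depth_leaves a) (root_child_change a b)"
proof
  assume "connected_through (level_constant A) P (two_depth_leaves a) (root_child_change a b)"
  then obtain t where t: "t \<in> level_constant A"
    and glued: "\<And>w. leaf (two_depth_leaves a) w \<Longrightarrow> occurs_at t (w @ x) (root_child_change a b)"
    using assms(2) unfolding connected_through_def by blast
  have "leaf (two_depth_leaves a) [False]" "leaf (two_depth_leaves a) [True, False]"
    by (auto simp: leaf_def two_depth_leaves_def)
  then have "occurs_at t ([False] @ x) (root_child_change a b)"
    "occurs_at t ([True, False] @ x) (root_child_change a b)"
    using glued by blast+
  then have "t ([False] @ x @ [False]) = b" "t ([True, False] @ x) = a"
    by (simp_all add: occurs_at_root_child_change_iff)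
  moreover have "t ([False] @ x @ [False]) = t ([True, False] @ x)"
    using level_constant_same_length[OF t] by simp
  ultimately show False
    using assms(1) by simp
qed

lemma not_strongly_irreducible_level_constant:
  assumes "a \<in> A" "b \<in> A" "a \<noteq> b"
  shows "\<not> strongly_irreducible (level_constant A)"
proof
  assume "strongly_irreducible (level_constant A)"
  then obtain P where "complete_prefix_code P"
    and "\<And>u v. accepted (level_constant A) u \<Longrightarrow> accepted (level_constant A) v
      \<Longrightarrow> connected_through (level_constant A) P u v"
    unfolding strongly_irreducible_def by blast
  moreover obtain x where "x \<in> P"
    using complete_prefix_code_nonempty[OF \<open>complete_prefix_code P\<close>] by blast
  ultimately show False
    using level_constant_not_connected[OF assms(3) \<open>x \<in> P\<close>]
      accepted_two_depth_leaves[OF assms(1)] accepted_root_child_change[OF assms(1,2)]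
    by blast
qed

lemma not_uniformly_strongly_irreducible_level_constant:
  assumes "a \<in> A" "b \<in> A" "a \<noteq> b"
  shows "\<not> uniformly_strongly_irreducible (level_constant A)"
proof
  assume "uniformly_strongly_irreducible (level_constant A)"
  then obtain k where "\<And>u v. accepted (level_constant A) u
      \<Longrightarrow> accepted (level_constant A) v \<Longrightarrow> connected_through (level_constant A) {x. length x = k} u v"
    unfolding uniformly_strongly_irreducible_def by blast
  then show False
    using level_constant_not_connected[OF assms(3), of "replicate k False" "{x. length x = k}" A]
      accepted_two_depth_leaves[OF assms(1)] accepted_root_child_change[OF assms(1,2)]
    by simp
qed

theorem corollary3p11:
  shows "(\<exists>(A::nat set) X. is_tree_shift A X \<and> block_gluing X \<and> \<not> strongly_irreducible X)
       \<and> (\<exists>(A::nat set) X. is_tree_shift A X \<and> uniformly_block_gluing X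
              \<and> \<not> uniformly_strongly_irreducible X)"
proof -
  let ?X = "level_constant {0, 1 :: nat}"
  have "is_tree_shift {0, 1} ?X"
    by (simp add: is_tree_shift_level_constant)
  moreover have "\<not> strongly_irreducible ?X"
    by (rule not_strongly_irreducible_level_constant[of 0 _ 1]) simp_all
  moreover have "\<not> uniformly_strongly_irreducible ?X"
    by (rule not_uniformly_strongly_irreducible_level_constant[of 0 _ 1]) simp_all
  ultimately show ?thesis
    using block_gluing_level_constant uniformly_block_gluing_level_constant by blast
qed

end
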